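(* Let $0<r_1<r_2<r_3$ satisfy \[ r_2(r_3-r_1)^3 - r_1(r_3+r_2)^3 - r_3(r_1+r_2)^3 \ \ge\ 0 . \] Then the only stationary points (zeros of the gradient) of the smooth function $f:\mathbb T^2\to\mathbb R$, \[ f(\alpha,\beta)=F_{12}(\alpha)+F_{13}(\beta)+F_{23}(\alpha-\beta),\] are $(0,0)$, $(0,\pi)$, $(\pi,0)$ and $(\pi,\pi)$.
   Context: For $i,j\in\{1,2,3\}$ and $\theta\in\mathbb R/2\pi\mathbb Z$ set $D_{ij}(\theta)=r_i^2+r_j^2-2r_ir_j\cos\theta$ and $F_{ij}(\theta)=D_{ij}(\theta)^{-1/2}$ (smooth since $r_i\neq r_j$). *)

theory Defs
  imports "HOL-Analysis.Analysis"
begin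

definition Dij :: "real \<Rightarrow> real \<Rightarrow> real \<Rightarrow> real" where
  "Dij ri rj \<theta> = ri\<^sup>2 + rj\<^sup>2 - 2 * ri * rj * cos \<theta>"

definition Fij :: "real \<Rightarrow> real \<Rightarrow> real \<Rightarrow> real" where
  "Fij ri rj \<theta> = Dij ri rj \<theta> powr (-1/2)"

text \<open>f(alpha,beta) = F_12(alpha) + F_13(beta) + F_23(alpha - beta), as a
  2pi-periodic function on R^2 (i.e. a function on the torus).\<close>
definition ftorus :: "real \<Rightarrow> real \<Rightarrow> real \<Rightarrow> real \<times> real \<Rightarrow> real" where
  "ftorus r1 r2 r3 p = Fij r1 r2 (fst p) + Fij r1 r3 (snd p) + Fij r2 r3 (fst p - snd p)"

definition cong_2pi :: "real \<Rightarrow> real \<Rightarrow> bool" where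
  "cong_2pi x y \<longleftrightarrow> (\<exists>k::int. x - y = 2 * pi * of_int k)"

end

theory Submission
  imports Defs
begin

text \<open>With the weights \<open>H_ij = D_ij^(3/2) / (r_i r_j) > 0\<close> one has \<open>F_ij' = - sin / H_ij\<close>,
  so at a stationary point \<open>sin \<alpha> = - s H_12 / H_23\<close> and \<open>sin \<beta> = s H_13 / H_23\<close>, where
  \<open>s = sin (\<alpha> - \<beta>)\<close>. Since \<open>(r_j - r_i)^2 \<le> D_ij \<le> (r_i + r_j)^2\<close>, the hypothesis says
  exactly that \<open>max H_12 + max H_23 \<le> min H_13\<close>, whence \<open>\<bar>sin \<beta>\<bar> \<ge> \<bar>sin \<alpha>\<bar> + \<bar>s\<bar>\<close>. This
  contradicts the strict triangle inequality \<open>\<bar>sin (x + y)\<bar> < \<bar>sin x\<bar> + \<bar>sin y\<bar>\<close>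
  (valid when \<open>sin x, sin y \<noteq> 0\<close>) unless \<open>s = 0\<close>, and then \<open>sin \<alpha> = sin \<beta> = 0\<close>.\<close>

lemma Dij_bounds:
  assumes "0 < ri" "ri < rj"
  shows "(rj - ri)^2 \<le> Dij ri rj t" "Dij ri rj t \<le> (ri + rj)^2" "0 < Dij ri rj t"
proof -
  have "0 < ri * rj" using assms by simp
  then have "ri * rj * cos t \<le> ri * rj" "- (ri * rj) \<le> ri * rj * cos t"
    using mult_left_mono[OF cos_le_one[of t]] mult_left_mono[OF cos_ge_minus_one[of t]]
    by (auto simp: less_imp_le)
  then show lower: "(rj - ri)^2 \<le> Dij ri rj t" and "Dij ri rj t \<le> (ri + rj)^2"
    unfolding Dij_def by (simp_all add: power2_eq_square algebra_simps)
  have "0 < (rj - ri)^2" using assms by simp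
  with lower show "0 < Dij ri rj t" by linarith
qed

definition Hij :: "real \<Rightarrow> real \<Rightarrow> real \<Rightarrow> real" where
  "Hij ri rj t = Dij ri rj t powr (3/2) / (ri * rj)"

lemma Hij_pos:
  assumes "0 < ri" "ri < rj"
  shows "0 < Hij ri rj t"
  unfolding Hij_def using Dij_bounds(3)[OF assms, of t] assms by simp

lemma Fij_has_real_derivative:
  assumes "0 < ri" "ri < rj"
  shows "(Fij ri rj has_real_derivative - (sin t / Hij ri rj t)) (at t)"
proof -
  have D: "(Dij ri rj has_real_derivative 2 * ri * rj * sin t) (at t)"
    unfolding Dij_def[abs_def] by (auto intro!: derivative_eq_intros)
  have "(Fij ri rj has_real_derivative
      (-1/2) * Dij ri rj t powr (-1/2 - of_nat 1) * (2 * ri * rj * sin t)) (at t)"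
    unfolding Fij_def[abs_def] by (rule DERIV_fun_powr[OF D Dij_bounds(3)[OF assms]])
  moreover have "Dij ri rj t powr (-3/2) = 1 / Dij ri rj t powr (3/2)"
    using powr_minus_divide[of "Dij ri rj t" "3/2"] by simp
  ultimately show ?thesis unfolding Hij_def by (simp add: ac_simps)
qed

lemma powr_three_halves_square:
  assumes "0 < (x::real)"
  shows "(x^2) powr (3/2) = x^3"
proof -
  have "(x^2) powr (3/2) = (x powr 2) powr (3/2)"
    using powr_realpow[OF assms, of 2] by simp
  also have "\<dots> = x powr 3"
    by (simp add: powr_powr)
  also have "\<dots> = x^3"
    using powr_realpow[OF assms, of 3] by simp
  finally show ?thesis .
qed

lemma Hij_bounds:
  assumes "0 < ri" "ri < rj"
  shows "(rj - ri)^3 / (ri * rj) \<le> Hij ri rj t" "Hij ri rj t \<le> (ri + rj)^3 / (ri * rj)"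
proof -
  have "((rj - ri)^2) powr (3/2) \<le> Dij ri rj t powr (3/2)"
       "Dij ri rj t powr (3/2) \<le> ((ri + rj)^2) powr (3/2)"
    using Dij_bounds[OF assms, of t] by (auto intro!: powr_mono2)
  then have "(rj - ri)^3 \<le> Dij ri rj t powr (3/2)" "Dij ri rj t powr (3/2) \<le> (ri + rj)^3"
    using assms by (simp_all add: powr_three_halves_square)
  then show "(rj - ri)^3 / (ri * rj) \<le> Hij ri rj t" "Hij ri rj t \<le> (ri + rj)^3 / (ri * rj)"
    unfolding Hij_def using assms by (simp_all add: divide_right_mono)
qed

lemma Hij_sum_le:
  assumes "0 < r1" "r1 < r2" "r2 < r3"
    and "r2 * (r3 - r1)^3 - r1 * (r3 + r2)^3 - r3 * (r1 + r2)^3 \<ge> 0"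
  shows "Hij r1 r2 a + Hij r2 r3 c \<le> Hij r1 r3 b"
proof -
  have r13: "0 < r1" "r1 < r3" and r23: "0 < r2" "r2 < r3"
    using assms(1-3) by auto
  have "(r1 + r2)^3 / (r1 * r2) + (r2 + r3)^3 / (r2 * r3)
      = (r1 * (r3 + r2)^3 + r3 * (r1 + r2)^3) / (r1 * r2 * r3)"
    using assms(1-3) by (simp add: field_simps)
  also have "\<dots> \<le> r2 * (r3 - r1)^3 / (r1 * r2 * r3)"
    using assms by (intro divide_right_mono) auto
  also have "\<dots> = (r3 - r1)^3 / (r1 * r3)"
    using assms(1,2) by simp
  finally show ?thesis
    using Hij_bounds(2)[OF assms(1,2), of a] Hij_bounds(2)[OF r23, of c] Hij_bounds(1)[OF r13, of b]
    by linarith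
qed

lemma ftorus_has_derivative:
  assumes "0 < r1" "r1 < r2" "r2 < r3"
  shows "(ftorus r1 r2 r3 has_derivative
          (\<lambda>h. fst h * - (sin a / Hij r1 r2 a) + snd h * - (sin b / Hij r1 r3 b)
                 + (fst h - snd h) * - (sin (a - b) / Hij r2 r3 (a - b)))) (at (a, b))"
proof -
  have fst: "(fst has_derivative fst) (at (a, b))"
   and snd: "(snd has_derivative snd) (at (a, b))"
   and diff: "((\<lambda>p. fst p - snd p) has_derivative (\<lambda>h. fst h - snd h)) (at (a, b))"
    by (auto intro!: derivative_eq_intros)
  have r13: "0 < r1" "r1 < r3" and r23: "0 < r2" "r2 < r3" using assms by auto
  have "((\<lambda>p. Fij r1 r2 (fst p)) has_derivative (\<lambda>h. fst h * - (sin a / Hij r1 r2 a))) (at (a, b))"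
    using DERIV_compose_FDERIV[OF Fij_has_real_derivative[OF assms(1,2), of "fst (a, b)"] fst]
    by simp
  moreover have "((\<lambda>p. Fij r1 r3 (snd p)) has_derivative (\<lambda>h. snd h * - (sin b / Hij r1 r3 b))) (at (a, b))"
    using DERIV_compose_FDERIV[OF Fij_has_real_derivative[OF r13, of "snd (a, b)"] snd]
    by simp
  moreover have "((\<lambda>p. Fij r2 r3 (fst p - snd p)) has_derivative
      (\<lambda>h. (fst h - snd h) * - (sin (a - b) / Hij r2 r3 (a - b)))) (at (a, b))"
    using DERIV_compose_FDERIV[OF Fij_has_real_derivative[OF r23, of "fst (a, b) - snd (a, b)"] diff]
    by simp
  ultimately show ?thesis
    unfolding ftorus_def[abs_def] by (intro has_derivative_add)
qed

lemma ftorus_stationary_iff: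
  assumes "0 < r1" "r1 < r2" "r2 < r3"
  shows "(ftorus r1 r2 r3 has_derivative (\<lambda>h. 0)) (at (a, b)) \<longleftrightarrow>
    sin a / Hij r1 r2 a + sin (a - b) / Hij r2 r3 (a - b) = 0 \<and>
    sin b / Hij r1 r3 b = sin (a - b) / Hij r2 r3 (a - b)"
proof -
  define x y z where "x = sin a / Hij r1 r2 a" and "y = sin b / Hij r1 r3 b"
    and "z = sin (a - b) / Hij r2 r3 (a - b)"
  define L :: "real \<times> real \<Rightarrow> real" where "L h = - (fst h * (x + z) + snd h * (y - z))" for h
  have "(\<lambda>h. fst h * - x + snd h * - y + (fst h - snd h) * - z) = L"
    by (simp add: L_def fun_eq_iff algebra_simps)
  then have deriv: "(ftorus r1 r2 r3 has_derivative L) (at (a, b))"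
    using ftorus_has_derivative[OF assms, of a b] by (simp only: x_def y_def z_def)
  have "(ftorus r1 r2 r3 has_derivative (\<lambda>h. 0)) (at (a, b)) \<longleftrightarrow> L = (\<lambda>h. 0)"
    using has_derivative_unique[OF deriv] deriv by blast
  also have "\<dots> \<longleftrightarrow> x + z = 0 \<and> y = z"
  proof
    assume "L = (\<lambda>h. 0)"
    then have "L (1, 0) = 0" "L (0, 1) = 0" by simp_all
    then show "x + z = 0 \<and> y = z" by (simp add: L_def)
  qed (simp add: L_def fun_eq_iff)
  finally show ?thesis
    unfolding x_def y_def z_def .
qed

lemma abs_sin_add_less:
  fixes x y :: real
  assumes "sin x \<noteq> 0" "sin y \<noteq> 0"
  shows "\<bar>sin (x + y)\<bar> < \<bar>sin x\<bar> + \<bar>sin y\<bar>"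
proof -
  have "(cos y)^2 < 1"
    using assms(2) sin_cos_squared_add[of y] by (smt (verit) zero_less_power2)
  then have "\<bar>sin x\<bar> * \<bar>cos y\<bar> < \<bar>sin x\<bar>"
    using assms(1) by (simp add: abs_square_less_1)
  moreover have "\<bar>cos x\<bar> * \<bar>sin y\<bar> \<le> \<bar>sin y\<bar>"
    using mult_right_mono[OF abs_cos_le_one[of x], of "\<bar>sin y\<bar>"] by simp
  moreover have "\<bar>sin (x + y)\<bar> \<le> \<bar>sin x\<bar> * \<bar>cos y\<bar> + \<bar>cos x\<bar> * \<bar>sin y\<bar>"
    unfolding sin_add abs_mult [symmetric] by (rule abs_triangle_ineq)
  ultimately show ?thesis by linarith
qed

lemma sin_eq_0_of_weighted_balance:
  fixes a b h12 h13 h23 :: real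
  assumes "0 < h12" "0 < h23" "h12 + h23 \<le> h13"
    and eq1: "sin a / h12 + sin (a - b) / h23 = 0"
    and eq2: "sin b / h13 = sin (a - b) / h23"
  shows "sin a = 0 \<and> sin b = 0"
proof -
  have "0 < h13" using assms(1-3) by linarith
  with assms have sin_a: "sin a = - sin (a - b) * h12 / h23"
              and sin_b: "sin b = sin (a - b) * h13 / h23"
    by (simp_all add: field_simps)
  show ?thesis
  proof (cases "sin (a - b) = 0")
    case True
    then show ?thesis using sin_a sin_b by simp
  next
    case False
    then have "sin a \<noteq> 0" using sin_a assms(1,2) by simp
    moreover have "\<bar>sin (b - a)\<bar> = \<bar>sin (a - b)\<bar>"
      by (metis minus_diff_eq sin_minus abs_minus_cancel)
    ultimately have "\<bar>sin b\<bar> < \<bar>sin a\<bar> + \<bar>sin (a - b)\<bar>"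
      using abs_sin_add_less[of a "b - a"] False by auto
    also have "\<dots> = \<bar>sin (a - b)\<bar> * (h12 + h23) / h23"
    proof -
      have "\<bar>sin a\<bar> = \<bar>sin (a - b)\<bar> * h12 / h23"
        using sin_a assms(1,2) by (simp add: abs_mult abs_divide)
      then show ?thesis
        using assms(2) by (simp add: add_divide_distrib distrib_left)
    qed
    also have "\<dots> \<le> \<bar>sin (a - b)\<bar> * h13 / h23"
      using assms(2,3) by (intro divide_right_mono mult_left_mono) auto
    also have "\<dots> = \<bar>sin b\<bar>"
      using sin_b \<open>0 < h13\<close> assms(2) by (simp add: abs_mult abs_divide)
    finally show ?thesis by simp
  qed
qed

lemma sin_eq_0_iff_cong_2pi: "sin x = 0 \<longleftrightarrow> cong_2pi x 0 \<or> cong_2pi x pi"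
proof -
  have "(\<exists>i::int. x = of_int i * pi) \<longleftrightarrow>
        (\<exists>k::int. x = of_int (2 * k) * pi \<or> x = of_int (2 * k + 1) * pi)"
    by (metis evenE oddE even_add odd_one even_mult_iff dvd_triv_left)
  then show ?thesis
    unfolding sin_zero_iff_int2 cong_2pi_def by (auto simp: algebra_simps)
qed

theorem proposition2p2:
  fixes r1 r2 r3 \<alpha> \<beta> :: real
  assumes "0 < r1" and "r1 < r2" and "r2 < r3"
    and "r2 * (r3 - r1)^3 - r1 * (r3 + r2)^3 - r3 * (r1 + r2)^3 \<ge> 0"
  shows "(ftorus r1 r2 r3 has_derivative (\<lambda>h. 0)) (at (\<alpha>, \<beta>)) \<longleftrightarrow>
         ((cong_2pi \<alpha> 0 \<and> cong_2pi \<beta> 0) \<or> (cong_2pi \<alpha> 0 \<and> cong_2pi \<beta> pi) \<or>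
          (cong_2pi \<alpha> pi \<and> cong_2pi \<beta> 0) \<or> (cong_2pi \<alpha> pi \<and> cong_2pi \<beta> pi))"
proof -
  have r23: "0 < r2" "r2 < r3" using assms(1-3) by auto
  have "(ftorus r1 r2 r3 has_derivative (\<lambda>h. 0)) (at (\<alpha>, \<beta>)) \<longleftrightarrow> sin \<alpha> = 0 \<and> sin \<beta> = 0"
  proof
    assume "(ftorus r1 r2 r3 has_derivative (\<lambda>h. 0)) (at (\<alpha>, \<beta>))"
    then show "sin \<alpha> = 0 \<and> sin \<beta> = 0"
      unfolding ftorus_stationary_iff[OF assms(1-3)]
      using sin_eq_0_of_weighted_balance[OF Hij_pos[OF assms(1,2)] Hij_pos[OF r23] Hij_sum_le[OF assms]]
      by blast
  next
    assume "sin \<alpha> = 0 \<and> sin \<beta> = 0"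
    then show "(ftorus r1 r2 r3 has_derivative (\<lambda>h. 0)) (at (\<alpha>, \<beta>))"
      unfolding ftorus_stationary_iff[OF assms(1-3)] by (simp add: sin_diff)
  qed
  then show ?thesis
    unfolding sin_eq_0_iff_cong_2pi by blast
qed

end
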